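(* For every integer $r \ge 2$, $\mathrm{gp_e}(Q_r) = 2^r$.
   Context: $Q_r$ is the $r$-dimensional hypercube: vertex set $\{0,1\}^r$, two vertices adjacent iff they differ in exactly one coordinate. A set $S$ of edges of a graph $G$ is an edge general position set if no geodesic (shortest path) of $G$ contains three edges of $S$; $\mathrm{gp_e}(G)$ is the maximum cardinality of an edge general position set of $G$. *)

theory Defs
  imports Main
begin

text \<open>A (simple, undirected) graph is given by a vertex set V and an adjacency
relation E (assumed symmetric and irreflexive where relevant).\<close>

definition graph_edges :: "'a set \<Rightarrow> ('a \<Rightarrow> 'a \<Rightarrow> bool) \<Rightarrow> 'a set set" where
  "graph_edges V E = {{u, v} | u v. u \<in> V \<and> v \<in> V \<and> E u v}"

definition is_walk :: "'a set \<Rightarrow> ('a \<Rightarrow> 'a \<Rightarrow> bool) \<Rightarrow> 'a list \<Rightarrow> bool" where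
  "is_walk V E p \<longleftrightarrow> p \<noteq> [] \<and> set p \<subseteq> V \<and> (\<forall>i. Suc i < length p \<longrightarrow> E (p ! i) (p ! Suc i))"

definition graph_dist :: "'a set \<Rightarrow> ('a \<Rightarrow> 'a \<Rightarrow> bool) \<Rightarrow> 'a \<Rightarrow> 'a \<Rightarrow> nat" where
  "graph_dist V E u v = (LEAST n. \<exists>p. is_walk V E p \<and> hd p = u \<and> last p = v \<and> length p = Suc n)"

definition is_geodesic :: "'a set \<Rightarrow> ('a \<Rightarrow> 'a \<Rightarrow> bool) \<Rightarrow> 'a list \<Rightarrow> bool" where
  "is_geodesic V E p \<longleftrightarrow> is_walk V E p \<and> length p = Suc (graph_dist V E (hd p) (last p))"

definition walk_edges :: "'a list \<Rightarrow> 'a set set" where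
  "walk_edges p = {{p ! i, p ! Suc i} | i. Suc i < length p}"

definition edge_gp_set :: "'a set \<Rightarrow> ('a \<Rightarrow> 'a \<Rightarrow> bool) \<Rightarrow> 'a set set \<Rightarrow> bool" where
  "edge_gp_set V E S \<longleftrightarrow> S \<subseteq> graph_edges V E \<and>
     (\<forall>p. is_geodesic V E p \<longrightarrow> card (S \<inter> walk_edges p) \<le> 2)"

definition gp_e :: "'a set \<Rightarrow> ('a \<Rightarrow> 'a \<Rightarrow> bool) \<Rightarrow> nat" where
  "gp_e V E = Max {card S | S. edge_gp_set V E S}"

definition hypercube_V :: "nat \<Rightarrow> bool list set" where
  "hypercube_V r = {xs. length xs = r}"

definition hypercube_E :: "nat \<Rightarrow> bool list \<Rightarrow> bool list \<Rightarrow> bool" where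
  "hypercube_E r xs ys \<longleftrightarrow> card {i. i < r \<and> xs ! i \<noteq> ys ! i} = 1"

end

(* A geodesic of Q_r changes every coordinate at most once, since along a geodesic the
   Hamming distance of two vertices equals the distance of their positions.  Hence the
   2^r edges in directions 0 and 1 meet every geodesic in at most two edges.

   Conversely, for every vertex u the walk flipping the coordinates 0, 1, ..., r - 1 of u
   in this order is a geodesic to the antipode of u, so it contains at most two edges of
   an edge general position set S.  Each edge {x, x + e_i} lies on two of these 2^r
   walks, namely those starting at x and at x + e_i with their first i coordinates
   flipped, and double counting gives 2 |S| <= 2 * 2^r. *)

theory Submission
  imports Defs
begin

lemma is_walk_Cons:
  "is_walk V E (a # q) \<longleftrightarrow> a \<in> V \<and> (q = [] \<or> E a (hd q) \<and> is_walk V E q)"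
proof (cases q)
  case (Cons b q')
  have "(\<forall>i. Suc i < length (a # q) \<longrightarrow> E ((a # q) ! i) ((a # q) ! Suc i)) \<longleftrightarrow>
        E a b \<and> (\<forall>i. Suc i < length q \<longrightarrow> E (q ! i) (q ! Suc i))"
    using Cons by (auto simp: less_Suc_eq_0_disj)
  then show ?thesis using Cons by (auto simp: is_walk_def)
qed (simp add: is_walk_def)

lemma finite_walk_edges: "finite (walk_edges p)"
proof -
  have "walk_edges p \<subseteq> (\<lambda>i. {p ! i, p ! Suc i}) ` {..<length p}"
    unfolding walk_edges_def by auto
  then show ?thesis by (rule finite_subset) simp
qed

lemma graph_dist_eqI:
  assumes lower: "\<And>q. is_walk V E q \<Longrightarrow> f (hd q) (last q) \<le> length q - 1"
    and p: "is_walk V E p" "hd p = u" "last p = v" "length p = Suc (f u v)"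
  shows "graph_dist V E u v = f u v"
  unfolding graph_dist_def
proof (rule Least_equality)
  show "\<exists>p. is_walk V E p \<and> hd p = u \<and> last p = v \<and> length p = Suc (f u v)"
    using p by blast
next
  fix n assume "\<exists>q. is_walk V E q \<and> hd q = u \<and> last q = v \<and> length q = Suc n"
  then show "f u v \<le> n" using lower by fastforce
qed

lemma gp_e_eqI:
  assumes "edge_gp_set V E S" "card S = n" "\<And>T. edge_gp_set V E T \<Longrightarrow> card T \<le> n"
  shows "gp_e V E = n"
  unfolding gp_e_def
proof (rule Max_eqI)
  show "finite {card T |T. edge_gp_set V E T}"
    by (rule finite_subset[of _ "{..n}"]) (auto dest: assms(3))
qed (use assms in auto)

definition diff_coords :: "nat \<Rightarrow> bool list \<Rightarrow> bool list \<Rightarrow> nat set" where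
  "diff_coords r x y = {i. i < r \<and> x ! i \<noteq> y ! i}"

definition hamming :: "nat \<Rightarrow> bool list \<Rightarrow> bool list \<Rightarrow> nat" where
  "hamming r x y = card (diff_coords r x y)"

lemma hypercube_E_iff_hamming: "hypercube_E r x y \<longleftrightarrow> hamming r x y = 1"
  by (simp add: hypercube_E_def hamming_def diff_coords_def)

lemma diff_coords_commute: "diff_coords r x y = diff_coords r y x"
  unfolding diff_coords_def by auto

lemma hamming_refl [simp]: "hamming r x x = 0"
  by (simp add: hamming_def diff_coords_def)

lemma hamming_triangle: "hamming r x z \<le> hamming r x y + hamming r y z"
proof -
  have "diff_coords r x z \<subseteq> diff_coords r x y \<union> diff_coords r y z"
    unfolding diff_coords_def by auto
  then have "hamming r x z \<le> card (diff_coords r x y \<union> diff_coords r y z)"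
    unfolding hamming_def by (intro card_mono) (auto simp: diff_coords_def)
  also have "\<dots> \<le> hamming r x y + hamming r y z"
    unfolding hamming_def by (rule card_Un_le)
  finally show ?thesis .
qed

lemma hamming_eq_0_iff:
  assumes "length x = r" "length y = r"
  shows "hamming r x y = 0 \<longleftrightarrow> x = y"
  using assms by (auto simp: hamming_def diff_coords_def intro: nth_equalityI)

lemma finite_hypercube_V: "finite (hypercube_V r)"
  using finite_lists_length_eq[of "UNIV :: bool set" r] by (simp add: hypercube_V_def)

lemma card_hypercube_V: "card (hypercube_V r) = 2 ^ r"
  using card_lists_length_eq[of "UNIV :: bool set" r] by (simp add: hypercube_V_def)

definition flip_bit :: "nat \<Rightarrow> bool list \<Rightarrow> bool list" where
  "flip_bit i x = x[i := \<not> x ! i]"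

lemma length_flip_bit [simp]: "length (flip_bit i x) = length x"
  by (simp add: flip_bit_def)

lemma nth_flip_bit: "j < length x \<Longrightarrow> flip_bit i x ! j = (if j = i then \<not> x ! i else x ! j)"
  by (simp add: flip_bit_def nth_list_update)

lemma flip_bit_flip_bit [simp]: "flip_bit i (flip_bit i x) = x"
  by (cases "i < length x") (simp_all add: flip_bit_def list_update_beyond)

lemma flip_bit_neq: "i < length x \<Longrightarrow> flip_bit i x \<noteq> x"
  by (metis nth_flip_bit)

lemma diff_coords_flip_bit: "length x = r \<Longrightarrow> i < r \<Longrightarrow> diff_coords r x (flip_bit i x) = {i}"
  unfolding diff_coords_def by (auto simp: nth_flip_bit split: if_splits)

lemma flip_bit_eqI:
  assumes "length x = r" "length y = r" "diff_coords r x y = {i}"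
  shows "y = flip_bit i x"
  using assms by (intro nth_equalityI) (auto simp: diff_coords_def nth_flip_bit set_eq_iff)

lemma hypercube_E_flip_bit: "length x = r \<Longrightarrow> i < r \<Longrightarrow> hypercube_E r x (flip_bit i x)"
  by (simp add: hypercube_E_iff_hamming hamming_def diff_coords_flip_bit)

lemma hypercube_edges_eq:
  "graph_edges (hypercube_V r) (hypercube_E r) =
     {{x, flip_bit i x} | x i. length x = r \<and> i < r}"
proof (intro set_eqI iffI)
  fix e assume "e \<in> graph_edges (hypercube_V r) (hypercube_E r)"
  then obtain x y where e: "e = {x, y}" "length x = r" "length y = r" "hypercube_E r x y"
    unfolding graph_edges_def hypercube_V_def by blast
  then obtain i where "diff_coords r x y = {i}"
    by (auto simp: hypercube_E_iff_hamming hamming_def card_1_singleton_iff)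
  moreover from this have "i < r" by (auto simp: diff_coords_def)
  ultimately show "e \<in> {{x, flip_bit i x} | x i. length x = r \<and> i < r}"
    using e flip_bit_eqI by blast
next
  fix e assume "e \<in> {{x, flip_bit i x} | x i. length x = r \<and> i < r}"
  then obtain x i where "e = {x, flip_bit i x}" "length x = r" "i < r" by blast
  then show "e \<in> graph_edges (hypercube_V r) (hypercube_E r)"
    unfolding graph_edges_def hypercube_V_def
    by (intro CollectI exI[of _ x] exI[of _ "flip_bit i x"]) (simp add: hypercube_E_flip_bit)
qed

lemma hypercube_walk_length:
  "is_walk (hypercube_V r) (hypercube_E r) p \<Longrightarrow> i < length p \<Longrightarrow> length (p ! i) = r"
  unfolding is_walk_def hypercube_V_def using nth_mem by blast

lemma hypercube_walk_hamming_le: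
  assumes w: "is_walk (hypercube_V r) (hypercube_E r) p" and "a \<le> b" "b < length p"
  shows "hamming r (p ! a) (p ! b) \<le> b - a"
  using assms(2,3)
proof (induction b rule: dec_induct)
  case (step b)
  have "hamming r (p ! b) (p ! Suc b) = 1"
    using w step.prems unfolding is_walk_def hypercube_E_iff_hamming by blast
  then show ?case
    using step hamming_triangle[of r "p ! a" "p ! Suc b" "p ! b"] by simp
qed simp

lemma hypercube_walk_exists:
  "length u = r \<Longrightarrow> length v = r \<Longrightarrow>
   \<exists>p. is_walk (hypercube_V r) (hypercube_E r) p \<and> hd p = u \<and> last p = v \<and>
       length p = Suc (hamming r u v)"
proof (induction "hamming r u v" arbitrary: u)
  case 0
  then have "u = v" using hamming_eq_0_iff by metis
  with 0 show ?case by (intro exI[of _ "[u]"]) (simp add: is_walk_def hypercube_V_def)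
next
  case (Suc n)
  then obtain i where i: "i \<in> diff_coords r u v"
    by (metis card.empty hamming_def nat.distinct(1) ex_in_conv)
  let ?u' = "flip_bit i u"
  have "diff_coords r ?u' v = diff_coords r u v - {i}"
    using i Suc.prems by (auto simp: diff_coords_def nth_flip_bit split: if_splits)
  then have "n = hamming r ?u' v"
    using i Suc.hyps(2) by (simp add: hamming_def diff_coords_def)
  then obtain p where p: "is_walk (hypercube_V r) (hypercube_E r) p" "hd p = ?u'" "last p = v"
      "length p = Suc n"
    using Suc by fastforce
  have "hypercube_E r u ?u'" using i Suc.prems by (simp add: hypercube_E_flip_bit diff_coords_def)
  then show ?case using p Suc
    by (intro exI[of _ "u # p"]) (auto simp: is_walk_Cons hypercube_V_def)
qed

lemma hypercube_graph_dist:
  assumes "length u = r" "length v = r"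
  shows "graph_dist (hypercube_V r) (hypercube_E r) u v = hamming r u v"
proof -
  obtain p where "is_walk (hypercube_V r) (hypercube_E r) p" "hd p = u" "last p = v"
      "length p = Suc (hamming r u v)"
    using hypercube_walk_exists[OF assms] by blast
  moreover have "hamming r (hd q) (last q) \<le> length q - 1"
    if "is_walk (hypercube_V r) (hypercube_E r) q" for q
  proof -
    have "q \<noteq> []" using that by (simp add: is_walk_def)
    then show ?thesis
      using hypercube_walk_hamming_le[OF that, of 0 "length q - 1"]
      by (simp add: hd_conv_nth last_conv_nth)
  qed
  ultimately show ?thesis by (rule graph_dist_eqI[rotated])
qed

lemma hypercube_geodesic_iff:
  "is_geodesic (hypercube_V r) (hypercube_E r) p \<longleftrightarrow>
     is_walk (hypercube_V r) (hypercube_E r) p \<and> length p = Suc (hamming r (hd p) (last p))"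
proof -
  have "graph_dist (hypercube_V r) (hypercube_E r) (hd p) (last p) = hamming r (hd p) (last p)"
    if "is_walk (hypercube_V r) (hypercube_E r) p"
  proof -
    have "p \<noteq> []" using that by (simp add: is_walk_def)
    then show ?thesis
      using hypercube_walk_length[OF that]
      by (intro hypercube_graph_dist) (auto simp: hd_conv_nth last_conv_nth)
  qed
  then show ?thesis unfolding is_geodesic_def by auto
qed

lemma hypercube_geodesic_hamming:
  assumes g: "is_geodesic (hypercube_V r) (hypercube_E r) p" and "a \<le> b" "b < length p"
  shows "hamming r (p ! a) (p ! b) = b - a"
proof -
  define n where "n = length p - 1"
  have w: "is_walk (hypercube_V r) (hypercube_E r) p" and "p \<noteq> []"
    using g by (auto simp: hypercube_geodesic_iff is_walk_def)
  then have "n = hamming r (p ! 0) (p ! n)"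
    using g by (simp add: hypercube_geodesic_iff hd_conv_nth last_conv_nth n_def)
  also have "\<dots> \<le> hamming r (p ! 0) (p ! a) + hamming r (p ! a) (p ! b) + hamming r (p ! b) (p ! n)"
    using hamming_triangle[of r "p ! 0" "p ! n" "p ! b"] hamming_triangle[of r "p ! 0" "p ! b" "p ! a"]
    by linarith
  finally show ?thesis
    using hypercube_walk_hamming_le[OF w, of 0 a] hypercube_walk_hamming_le[OF w, of a b]
      hypercube_walk_hamming_le[OF w, of b n] assms(2,3) n_def
    by linarith
qed

text \<open>If steps j and k flip the same coordinate, then p ! j, p ! Suc k have the same
  Hamming distance as p ! Suc j, p ! k, although their positions are two further apart.\<close>
lemma hypercube_geodesic_flips_once:
  assumes g: "is_geodesic (hypercube_V r) (hypercube_E r) p" and jk: "j < k" "Suc k < length p"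
    and dj: "diff_coords r (p ! j) (p ! Suc j) = {d}"
    and dk: "diff_coords r (p ! k) (p ! Suc k) = {d}"
  shows False
proof -
  have "diff_coords r (p ! j) (p ! Suc k) = diff_coords r (p ! Suc j) (p ! k)"
  proof (intro set_eqI)
    fix i
    show "i \<in> diff_coords r (p ! j) (p ! Suc k) \<longleftrightarrow> i \<in> diff_coords r (p ! Suc j) (p ! k)"
      using dj dk unfolding diff_coords_def set_eq_iff by (cases "i = d") auto
  qed
  then have "hamming r (p ! j) (p ! Suc k) = hamming r (p ! Suc j) (p ! k)"
    by (simp add: hamming_def)
  then show False using hypercube_geodesic_hamming[OF g] jk by simp
qed

definition direction_edges :: "nat \<Rightarrow> nat \<Rightarrow> bool list set set" where
  "direction_edges r i = {{x, flip_bit i x} | x. length x = r}"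

lemma direction_edges_eq_image: "direction_edges r i = (\<lambda>x. {x, flip_bit i x}) ` hypercube_V r"
  by (auto simp: direction_edges_def hypercube_V_def)

lemma hypercube_edges_eq_direction_edges:
  "graph_edges (hypercube_V r) (hypercube_E r) = (\<Union>i<r. direction_edges r i)"
  unfolding hypercube_edges_eq direction_edges_def by blast

lemma diff_coords_direction_edge:
  assumes "{x, y} \<in> direction_edges r i" "i < r"
  shows "diff_coords r x y = {i}"
proof -
  obtain z where z: "{x, y} = {z, flip_bit i z}" "length z = r"
    using assms(1) by (auto simp: direction_edges_def)
  then have "x = z \<and> y = flip_bit i z \<or> x = flip_bit i z \<and> y = z"
    by (simp add: doubleton_eq_iff)
  then show ?thesis
    by (metis diff_coords_commute diff_coords_flip_bit[OF z(2) assms(2)])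
qed

lemma direction_edges_disjoint:
  assumes "i < r" "j < r" "i \<noteq> j"
  shows "direction_edges r i \<inter> direction_edges r j = {}"
proof -
  have "{x, flip_bit i x} \<notin> direction_edges r j" if "length x = r" for x
  proof
    assume "{x, flip_bit i x} \<in> direction_edges r j"
    then have "{i} = {j}"
      using diff_coords_direction_edge assms(2) diff_coords_flip_bit[OF that assms(1)] by metis
    then show False using assms(3) by simp
  qed
  then show ?thesis by (auto simp: direction_edges_def)
qed

text \<open>The edges of one direction form a perfect matching of the cube.\<close>
lemma card_direction_edges:
  assumes "i < r"
  shows "card (direction_edges r i) = 2 ^ (r - 1)"
proof -
  have member_edge: "{x, flip_bit i x} = {z, flip_bit i z}" if "z \<in> {x, flip_bit i x}" for x z
    using that by auto
  have "2 * card (direction_edges r i) = card (\<Union>(direction_edges r i))"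
  proof (rule card_partition)
    show "finite (direction_edges r i)"
      by (simp add: direction_edges_eq_image finite_hypercube_V)
    show "finite (\<Union>(direction_edges r i))"
      by (auto simp: direction_edges_eq_image finite_hypercube_V)
    show "card e = 2" if e: "e \<in> direction_edges r i" for e
    proof -
      obtain x where "e = {x, flip_bit i x}" "length x = r"
        using e by (auto simp: direction_edges_def)
      then show ?thesis using flip_bit_neq[of i x] assms by simp
    qed
    show "e1 \<inter> e2 = {}"
      if e: "e1 \<in> direction_edges r i" "e2 \<in> direction_edges r i" and "e1 \<noteq> e2" for e1 e2
    proof -
      obtain x1 x2 where "e1 = {x1, flip_bit i x1}" "e2 = {x2, flip_bit i x2}"
        using e by (auto simp: direction_edges_def)
      then show ?thesis using \<open>e1 \<noteq> e2\<close> member_edge by blast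
    qed
  qed
  also have "\<Union>(direction_edges r i) = hypercube_V r"
    by (auto simp: direction_edges_eq_image hypercube_V_def)
  finally show ?thesis
    using assms card_hypercube_V[of r] by (cases r) auto
qed

lemma geodesic_direction_edges_card_le:
  assumes g: "is_geodesic (hypercube_V r) (hypercube_E r) p" and "i < r"
  shows "card (walk_edges p \<inter> direction_edges r i) \<le> 1"
proof -
  have "e1 = e2"
    if e: "e1 \<in> walk_edges p \<inter> direction_edges r i" "e2 \<in> walk_edges p \<inter> direction_edges r i"
    for e1 e2
  proof -
    obtain j1 j2 where j: "Suc j1 < length p" "e1 = {p ! j1, p ! Suc j1}"
        "Suc j2 < length p" "e2 = {p ! j2, p ! Suc j2}"
      using e unfolding walk_edges_def by blast
    then have "diff_coords r (p ! j1) (p ! Suc j1) = {i}" "diff_coords r (p ! j2) (p ! Suc j2) = {i}"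
      using e \<open>i < r\<close> by (simp_all add: diff_coords_direction_edge)
    then have "j1 = j2"
      using hypercube_geodesic_flips_once[OF g] j(1,3) by (metis linorder_neqE_nat)
    then show ?thesis using j by simp
  qed
  then show ?thesis by (simp add: card_le_Suc0_iff_eq finite_walk_edges)
qed

lemma card_direction_union:
  assumes "D \<subseteq> {..<r}"
  shows "card (\<Union>i\<in>D. direction_edges r i) = card D * 2 ^ (r - 1)"
proof -
  have "finite D" using assms finite_subset by blast
  moreover have "finite (direction_edges r i)" for i
    by (simp add: direction_edges_eq_image finite_hypercube_V)
  moreover have "\<forall>i\<in>D. \<forall>j\<in>D. i \<noteq> j \<longrightarrow> direction_edges r i \<inter> direction_edges r j = {}"
    using assms direction_edges_disjoint by blast
  ultimately have "card (\<Union>i\<in>D. direction_edges r i) = (\<Sum>i\<in>D. card (direction_edges r i))"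
    by (intro card_UN_disjoint) auto
  also have "\<dots> = (\<Sum>i\<in>D. 2 ^ (r - 1))"
    using assms card_direction_edges by (intro sum.cong) auto
  finally show ?thesis by simp
qed

lemma direction_union_edge_gp_set:
  assumes "D \<subseteq> {..<r}" "card D \<le> 2"
  shows "edge_gp_set (hypercube_V r) (hypercube_E r) (\<Union>i\<in>D. direction_edges r i)"
  unfolding edge_gp_set_def
proof (intro conjI allI impI)
  show "(\<Union>i\<in>D. direction_edges r i) \<subseteq> graph_edges (hypercube_V r) (hypercube_E r)"
    using assms(1) by (auto simp: hypercube_edges_eq_direction_edges)
  fix p assume g: "is_geodesic (hypercube_V r) (hypercube_E r) p"
  have "finite D" using assms(1) finite_subset by blast
  have "card ((\<Union>i\<in>D. direction_edges r i) \<inter> walk_edges p)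
      = card (\<Union>i\<in>D. walk_edges p \<inter> direction_edges r i)"
    by (metis Int_commute Int_UN_distrib)
  also have "\<dots> \<le> (\<Sum>i\<in>D. card (walk_edges p \<inter> direction_edges r i))"
    using \<open>finite D\<close> by (rule card_UN_le)
  also have "\<dots> \<le> (\<Sum>i\<in>D. 1)"
    using assms(1) geodesic_direction_edges_card_le[OF g] by (intro sum_mono) auto
  also have "\<dots> \<le> 2" using assms(2) by simp
  finally show "card ((\<Union>i\<in>D. direction_edges r i) \<inter> walk_edges p) \<le> 2" .
qed

definition flip_prefix :: "nat \<Rightarrow> bool list \<Rightarrow> nat \<Rightarrow> bool list" where
  "flip_prefix r u k = map (\<lambda>j. if j < k then \<not> u ! j else u ! j) [0..<r]"

definition antipodal_walk :: "nat \<Rightarrow> bool list \<Rightarrow> bool list list" where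
  "antipodal_walk r u = map (flip_prefix r u) [0..<Suc r]"

lemma length_flip_prefix [simp]: "length (flip_prefix r u k) = r"
  by (simp add: flip_prefix_def)

lemma nth_flip_prefix [simp]:
  "j < r \<Longrightarrow> flip_prefix r u k ! j = (if j < k then \<not> u ! j else u ! j)"
  by (simp add: flip_prefix_def)

lemma flip_prefix_0: "length u = r \<Longrightarrow> flip_prefix r u 0 = u"
  by (intro nth_equalityI) auto

lemma flip_prefix_Suc: "k < r \<Longrightarrow> flip_prefix r u (Suc k) = flip_bit k (flip_prefix r u k)"
  by (intro nth_equalityI) (auto simp: nth_flip_bit)

lemma flip_prefix_flip_prefix: "length x = r \<Longrightarrow> flip_prefix r (flip_prefix r x k) k = x"
  by (intro nth_equalityI) auto

lemma length_antipodal_walk [simp]: "length (antipodal_walk r u) = Suc r"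
  by (simp add: antipodal_walk_def)

lemma nth_antipodal_walk [simp]: "k \<le> r \<Longrightarrow> antipodal_walk r u ! k = flip_prefix r u k"
  by (simp add: antipodal_walk_def del: upt_Suc)

lemma antipodal_walk_geodesic:
  assumes "length u = r"
  shows "is_geodesic (hypercube_V r) (hypercube_E r) (antipodal_walk r u)"
proof -
  have ne: "antipodal_walk r u \<noteq> []" by (simp add: antipodal_walk_def)
  have "is_walk (hypercube_V r) (hypercube_E r) (antipodal_walk r u)"
    unfolding is_walk_def
    by (auto simp: ne antipodal_walk_def hypercube_V_def flip_prefix_Suc hypercube_E_flip_bit
        simp del: upt_Suc)
  moreover have "diff_coords r u (flip_prefix r u r) = {..<r}"
    by (auto simp: diff_coords_def)
  ultimately show ?thesis
    using assms ne
    by (simp add: hypercube_geodesic_iff hd_conv_nth last_conv_nth flip_prefix_0 hamming_def)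
qed

lemma edge_on_antipodal_walk:
  assumes "length x = r" "i < r"
  shows "{x, flip_bit i x} \<in> walk_edges (antipodal_walk r (flip_prefix r x i))"
proof -
  have "{x, flip_bit i x} = {antipodal_walk r (flip_prefix r x i) ! i,
                             antipodal_walk r (flip_prefix r x i) ! Suc i}"
    using assms by (simp add: flip_prefix_Suc flip_prefix_flip_prefix)
  then show ?thesis
    using assms(2) unfolding walk_edges_def by (intro CollectI exI[of _ i]) simp
qed

lemma antipodal_walks_through_edge:
  assumes "e \<in> graph_edges (hypercube_V r) (hypercube_E r)"
  shows "2 \<le> card {u \<in> hypercube_V r. e \<in> walk_edges (antipodal_walk r u)}"
proof -
  obtain x i where e: "e = {x, flip_bit i x}" "length x = r" "i < r"
    using assms by (auto simp: hypercube_edges_eq)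
  define u1 u2 where "u1 = flip_prefix r x i" and "u2 = flip_prefix r (flip_bit i x) i"
  have "e \<in> walk_edges (antipodal_walk r u1)"
    using edge_on_antipodal_walk e by (simp add: u1_def)
  moreover have "e \<in> walk_edges (antipodal_walk r u2)"
    using edge_on_antipodal_walk[of "flip_bit i x" r i] e by (simp add: u2_def insert_commute)
  ultimately have "{u1, u2} \<subseteq> {u \<in> hypercube_V r. e \<in> walk_edges (antipodal_walk r u)}"
    by (simp add: u1_def u2_def hypercube_V_def)
  moreover have "u1 ! i \<noteq> u2 ! i"
    using e by (simp add: u1_def u2_def nth_flip_bit)
  then have "card {u1, u2} = 2" by (metis card_2_iff)
  moreover have "finite {u \<in> hypercube_V r. e \<in> walk_edges (antipodal_walk r u)}"
    by (simp add: finite_hypercube_V)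
  ultimately show ?thesis
    using card_mono by metis
qed

lemma hypercube_edge_gp_set_card_le:
  assumes S: "edge_gp_set (hypercube_V r) (hypercube_E r) S"
  shows "card S \<le> 2 ^ r"
proof -
  let ?V = "hypercube_V r" and ?W = "\<lambda>u. walk_edges (antipodal_walk r u)"
  have S_edges: "S \<subseteq> graph_edges ?V (hypercube_E r)"
    using S by (simp add: edge_gp_set_def)
  then have "finite S"
    by (rule finite_subset)
      (simp add: hypercube_edges_eq_direction_edges direction_edges_eq_image finite_hypercube_V)
  have "2 * card S = (\<Sum>e\<in>S. 2)" by simp
  also have "\<dots> \<le> (\<Sum>e\<in>S. card {u \<in> ?V. e \<in> ?W u})"
    using S_edges antipodal_walks_through_edge by (intro sum_mono) auto
  also have "\<dots> = (\<Sum>u\<in>?V. card {e \<in> S. e \<in> ?W u})"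
    using \<open>finite S\<close> finite_hypercube_V by (intro sum_multicount_gen[symmetric]) auto
  also have "\<dots> \<le> (\<Sum>u\<in>?V. 2)"
  proof (intro sum_mono)
    fix u assume "u \<in> ?V"
    then have "is_geodesic ?V (hypercube_E r) (antipodal_walk r u)"
      by (intro antipodal_walk_geodesic) (simp add: hypercube_V_def)
    then have "card (S \<inter> ?W u) \<le> 2" using S by (simp add: edge_gp_set_def)
    moreover have "{e \<in> S. e \<in> ?W u} = S \<inter> ?W u" by blast
    ultimately show "card {e \<in> S. e \<in> ?W u} \<le> 2" by simp
  qed
  also have "\<dots> = 2 * 2 ^ r" by (simp add: card_hypercube_V)
  finally show ?thesis by simp
qed

theorem theorem3p2:
  fixes r :: nat
  assumes "r \<ge> 2"
  shows "gp_e (hypercube_V r) (hypercube_E r) = 2 ^ r"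
proof (rule gp_e_eqI)
  have directions: "{0, 1} \<subseteq> {..<r}" using assms by auto
  show "edge_gp_set (hypercube_V r) (hypercube_E r) (\<Union>i\<in>{0, 1}. direction_edges r i)"
    using directions by (rule direction_union_edge_gp_set) simp
  have "card (\<Union>i\<in>{0, 1}. direction_edges r i) = 2 * 2 ^ (r - 1)"
    using card_direction_union[OF directions] by simp
  also have "\<dots> = 2 ^ r" using assms by (cases r) auto
  finally show "card (\<Union>i\<in>{0, 1}. direction_edges r i) = 2 ^ r" .
qed (rule hypercube_edge_gp_set_card_le)

end
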